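(* Let $X,Y$ be Banach spaces, let $-A$ be the generator of a strongly continuous semigroup $(T(t))_{t\ge0}$ on $X$, and let $C:\mathcal D(A)\to Y$ be linear and bounded for the graph norm. (i) If $(A,C)$ is an admissible and exactly observable BFC-system, then there is no sequence $(\lambda_n)$ in the approximate point spectrum $\sigma_A(A)$ with $\operatorname{Re}\lambda_n\to+\infty$, i.e. $\sup\{\operatorname{Re}\lambda:\lambda\in\sigma_A(A)\}<\infty$. (ii) In particular, if $C$ is an admissible zero-class operator for $A$ and $A$ has a sequence of approximate point spectrum with real parts tending to $+\infty$, then $C$ is not exactly observable (in any time $\eta>0$).
   Context: $\sigma_A(A)=\{\lambda\in\mathbb C: \inf_{x\in\mathcal D(A),\|x\|=1}\|\lambda x-Ax\|=0\}$. For $\tau\in(0,\infty]$ set $M(\tau)^2:=\sup_{x\in\mathcal D(A),\|x\|=1}\int_0^\tau\|CT(t)x\|_Y^2\,dt$ and $m(\tau)^2:=\inf_{x\in\mathcal D(A),\|x\|=1}\int_0^\tau\|CT(t)x\|_Y^2\,dt$. $C$ is admissible if $M(\tau)<\infty$ for some (equivalently all) finite $\tau>0$; exactly observable in time $\eta$ if $m(\eta)>0$; zero-class admissible if it is admissible and $\lim_{\tau\to0+}M(\tau)=0$. $(A,C)$ is a BFC-system if there exist $0<\eta<\tau$ such that $C$ is admissible and exactly observable in time $\tau$ and $M(\eta)<m(\tau)$. *)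

theory Defs
  imports "HOL-Analysis.Analysis"
begin

text \<open>The library has no class of complex normed vector spaces; we add one:
a real Banach space together with a compatible complex scalar multiplication.\<close>

class complex_banach = banach +
  fixes scaleC :: "complex \<Rightarrow> 'a \<Rightarrow> 'a" (infixr "*\<^sub>C" 75)
  assumes scaleC_add_right: "a *\<^sub>C (x + y) = a *\<^sub>C x + a *\<^sub>C y"
    and scaleC_add_left: "(a + b) *\<^sub>C x = a *\<^sub>C x + b *\<^sub>C x"
    and scaleC_scaleC: "a *\<^sub>C (b *\<^sub>C x) = (a * b) *\<^sub>C x"
    and scaleC_one: "1 *\<^sub>C x = x"
    and scaleC_of_real: "complex_of_real r *\<^sub>C x = r *\<^sub>R x"
    and norm_scaleC: "norm (a *\<^sub>C x) = cmod a * norm x"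

instantiation complex :: complex_banach
begin
definition scaleC_complex :: "complex \<Rightarrow> complex \<Rightarrow> complex" where
  "scaleC_complex a x = a * x"
instance
  by standard (auto simp: scaleC_complex_def algebra_simps norm_mult scaleR_conv_of_real)
end

definition clinear_on :: "'a::complex_banach set \<Rightarrow> ('a \<Rightarrow> 'b::complex_banach) \<Rightarrow> bool" where
  "clinear_on D f \<longleftrightarrow>
     (\<forall>x\<in>D. \<forall>y\<in>D. x + y \<in> D \<and> f (x + y) = f x + f y) \<and>
     (\<forall>a x. x \<in> D \<longrightarrow> a *\<^sub>C x \<in> D \<and> f (a *\<^sub>C x) = a *\<^sub>C f x)"

definition bounded_clinear_op :: "('a::complex_banach \<Rightarrow> 'b::complex_banach) \<Rightarrow> bool" where
  "bounded_clinear_op f \<longleftrightarrow> clinear_on UNIV f \<and> (\<exists>K. \<forall>x. norm (f x) \<le> K * norm x)"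

definition c0_semigroup :: "(real \<Rightarrow> 'a::complex_banach \<Rightarrow> 'a) \<Rightarrow> bool" where
  "c0_semigroup T \<longleftrightarrow>
     (\<forall>t\<ge>0. bounded_clinear_op (T t)) \<and>
     T 0 = id \<and>
     (\<forall>t\<ge>0. \<forall>s\<ge>0. T (t + s) = T t \<circ> T s) \<and>
     (\<forall>x. ((\<lambda>t. T t x) \<longlongrightarrow> x) (at_right 0))"

text \<open>The semigroup is generated by \<open>-A\<close>.  Domain of \<open>A\<close>:\<close>
definition gen_dom :: "(real \<Rightarrow> 'a::complex_banach \<Rightarrow> 'a) \<Rightarrow> 'a set" where
  "gen_dom T = {x. \<exists>y. ((\<lambda>h. (1 / h) *\<^sub>R (T h x - x)) \<longlongrightarrow> y) (at_right 0)}"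

definition genA :: "(real \<Rightarrow> 'a::complex_banach \<Rightarrow> 'a) \<Rightarrow> 'a \<Rightarrow> 'a" where
  "genA T x = - Lim (at_right 0) (\<lambda>h. (1 / h) *\<^sub>R (T h x - x))"

definition obs_operator :: "(real \<Rightarrow> 'a::complex_banach \<Rightarrow> 'a) \<Rightarrow> ('a \<Rightarrow> 'b::complex_banach) \<Rightarrow> bool" where
  "obs_operator T C \<longleftrightarrow> clinear_on (gen_dom T) C \<and>
     (\<exists>K. \<forall>x\<in>gen_dom T. norm (C x) \<le> K * (norm x + norm (genA T x)))"

definition approx_point_spectrum :: "(real \<Rightarrow> 'a::complex_banach \<Rightarrow> 'a) \<Rightarrow> complex set" where
  "approx_point_spectrum T =
     {l. (INF x\<in>{x\<in>gen_dom T. norm x = 1}. ennreal (norm (l *\<^sub>C x - genA T x))) = 0}"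

text \<open>\<open>obs_M2 T C \<tau> = M(\<tau>)\<^sup>2\<close> and \<open>obs_m2 T C \<tau> = m(\<tau>)\<^sup>2\<close>, as extended nonnegative reals,
for finite \<open>\<tau>\<close>.\<close>
definition obs_energy :: "(real \<Rightarrow> 'a::complex_banach \<Rightarrow> 'a) \<Rightarrow> ('a \<Rightarrow> 'b::complex_banach) \<Rightarrow> real \<Rightarrow> 'a \<Rightarrow> ennreal" where
  "obs_energy T C \<tau> x = (\<integral>\<^sup>+ t \<in> {0..\<tau>}. ennreal ((norm (C (T t x)))\<^sup>2) \<partial>lborel)"

definition obs_M2 :: "(real \<Rightarrow> 'a::complex_banach \<Rightarrow> 'a) \<Rightarrow> ('a \<Rightarrow> 'b::complex_banach) \<Rightarrow> real \<Rightarrow> ennreal" where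
  "obs_M2 T C \<tau> = (SUP x\<in>{x\<in>gen_dom T. norm x = 1}. obs_energy T C \<tau> x)"

definition obs_m2 :: "(real \<Rightarrow> 'a::complex_banach \<Rightarrow> 'a) \<Rightarrow> ('a \<Rightarrow> 'b::complex_banach) \<Rightarrow> real \<Rightarrow> ennreal" where
  "obs_m2 T C \<tau> = (INF x\<in>{x\<in>gen_dom T. norm x = 1}. obs_energy T C \<tau> x)"

definition admissible :: "(real \<Rightarrow> 'a::complex_banach \<Rightarrow> 'a) \<Rightarrow> ('a \<Rightarrow> 'b::complex_banach) \<Rightarrow> bool" where
  "admissible T C \<longleftrightarrow> (\<exists>\<tau>>0. obs_M2 T C \<tau> < \<infinity>)"

definition exactly_observable :: "(real \<Rightarrow> 'a::complex_banach \<Rightarrow> 'a) \<Rightarrow> ('a \<Rightarrow> 'b::complex_banach) \<Rightarrow> real \<Rightarrow> bool" where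
  "exactly_observable T C \<eta> \<longleftrightarrow> obs_m2 T C \<eta> > 0"

definition zero_class_admissible :: "(real \<Rightarrow> 'a::complex_banach \<Rightarrow> 'a) \<Rightarrow> ('a \<Rightarrow> 'b::complex_banach) \<Rightarrow> bool" where
  "zero_class_admissible T C \<longleftrightarrow> admissible T C \<and> ((obs_M2 T C) \<longlongrightarrow> 0) (at_right 0)"

text \<open>Comparing squares is equivalent to comparing \<open>M(\<eta>) < m(\<tau>)\<close>.\<close>
definition BFC_system :: "(real \<Rightarrow> 'a::complex_banach \<Rightarrow> 'a) \<Rightarrow> ('a \<Rightarrow> 'b::complex_banach) \<Rightarrow> bool" where
  "BFC_system T C \<longleftrightarrow> (\<exists>\<eta> \<tau>. 0 < \<eta> \<and> \<eta> < \<tau> \<and> admissible T C \<and>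
      exactly_observable T C \<tau> \<and> obs_M2 T C \<eta> < obs_m2 T C \<tau>)"

end

theory Submission
  imports Defs
begin

text \<open>If \<open>x\<close> is a unit approximate eigenvector of \<open>A\<close> for \<open>\<lambda>\<close>, then
  \<open>T(\<eta>) x \<approx> exp (-\<eta>\<lambda>) x\<close>, with an error controlled by \<open>\<parallel>\<lambda>x - Ax\<parallel>\<close>.  Splitting the
  observation window \<open>[0, \<tau>]\<close> at \<open>\<eta>\<close> therefore gives, in the limit,
  \<open>m(\<tau>)\<^sup>2 \<le> M(\<eta>)\<^sup>2 + 2 exp (-2\<eta> Re \<lambda>) M(\<tau> - \<eta>)\<^sup>2\<close>.  For a BFC-system the gap
  \<open>M(\<eta>) < m(\<tau>)\<close> bounds \<open>exp (-2\<eta> Re \<lambda>)\<close> from below, hence \<open>Re \<lambda>\<close> from above.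
  Admissibility makes \<open>M(\<tau> - \<eta>)\<close> finite via the semigroup property and the uniform
  boundedness principle.  For a zero-class admissible \<open>C\<close>, \<open>M(\<eta>) \<rightarrow> 0\<close> as \<open>\<eta> \<rightarrow> 0\<close>,
  so exact observability in any time would already make \<open>(A, C)\<close> a BFC-system.\<close>

lemma uniform_boundedness_sequence:
  fixes F :: "nat \<Rightarrow> 'a::banach \<Rightarrow> 'b::real_normed_vector"
  assumes lin: "\<And>n. bounded_linear (F n)"
    and pointwise: "\<And>x. \<exists>B. \<forall>n. norm (F n x) \<le> B"
  shows "\<exists>K. \<forall>n x. norm (F n x) \<le> K * norm x"
proof -
  define S where "S k = {x. \<forall>n. norm (F n x) \<le> real k}" for k :: nat
  have closed_S: "closed (S k)" for k
  proof -
    have "S k = (\<Inter>n. {x. norm (F n x) \<le> real k})" by (auto simp: S_def)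
    moreover have "closed {x. norm (F n x) \<le> real k}" for n
      by (intro closed_Collect_le continuous_intros linear_continuous_on[OF lin])
    ultimately show ?thesis by auto
  qed
  have "\<Union>(range S) = UNIV"
  proof safe
    fix x
    obtain B where "\<forall>n. norm (F n x) \<le> B" using pointwise by blast
    moreover obtain k where "B \<le> real k" using real_arch_simple by blast
    ultimately have "x \<in> S k" by (auto simp: S_def intro: order_trans)
    then show "x \<in> \<Union>(range S)" by blast
  qed simp
  then have "euclidean interior_of \<Union>(range S) \<noteq> {}" by simp
  moreover have "countable (range S)" by simp
  ultimately obtain k where "euclidean interior_of S k \<noteq> {}"
    using Baire_category_alt[of euclidean "range S"] completely_metrizable_space_euclidean closed_S
    by (metis (no_types, lifting) closed_closedin imageE)
  then have "interior (S k) \<noteq> {}" by (simp add: interior_of_def interior_def) blast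
  then obtain x0 r where r: "r > 0" "ball x0 r \<subseteq> S k"
    using mem_interior by blast
  have small: "norm (F n x) \<le> 2 * real k" if "norm x < r" for n x
  proof -
    have "x0 + x \<in> S k" "x0 \<in> S k" using r that by (auto simp: dist_norm)
    then have "norm (F n (x0 + x)) \<le> k" "norm (F n x0) \<le> k" by (auto simp: S_def)
    moreover have "F n x = F n (x0 + x) - F n x0"
      using linear_add[OF bounded_linear.linear[OF lin]] by simp
    ultimately show ?thesis using norm_triangle_ineq4[of "F n (x0 + x)" "F n x0"] by simp
  qed
  have "norm (F n x) \<le> (4 * real k / r) * norm x" for n x
  proof (cases "x = 0")
    case True
    then show ?thesis using linear_0[OF bounded_linear.linear[OF lin]] by simp
  next
    case False
    define c where "c = r / (2 * norm x)"
    have c: "c > 0" using False r by (simp add: c_def)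
    have "norm (c *\<^sub>R x) < r" using False r by (simp add: c_def)
    then have "norm (F n (c *\<^sub>R x)) \<le> 2 * real k" by (rule small)
    moreover have "F n (c *\<^sub>R x) = c *\<^sub>R F n x"
      using linear_scale[OF bounded_linear.linear[OF lin]] by simp
    ultimately have "norm (F n x) \<le> 2 * real k / c" using c by (simp add: field_simps)
    also have "\<dots> = (4 * real k / r) * norm x" using False r by (simp add: c_def field_simps)
    finally show ?thesis .
  qed
  then show ?thesis by blast
qed

lemma norm_add_squared_le:
  fixes p q :: "'a::real_normed_vector"
  shows "(norm (p + q))\<^sup>2 \<le> 2 * (norm p)\<^sup>2 + 2 * (norm q)\<^sup>2"
proof -
  have "(norm (p + q))\<^sup>2 \<le> (norm p + norm q)\<^sup>2"
    by (simp add: power_mono norm_triangle_ineq)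
  also have "\<dots> \<le> 2 * (norm p)\<^sup>2 + 2 * (norm q)\<^sup>2"
    by (smt (verit, best) sum_squares_bound power2_sum)
  finally show ?thesis .
qed

lemma onorm_scaleR_vector: "onorm (\<lambda>h::real. h *\<^sub>R v) = norm v"
  using onorm_scaleR_left[of "\<lambda>x::real. x" v] onorm_id[where 'a=real]
  by (simp add: bounded_linear_ident)

lemma le_of_exp_lower_bound:
  fixes a b c r :: real
  assumes "0 < a" "a \<le> b * exp (- (c * r))" "c > 0"
  shows "r \<le> - ln (a / b) / c"
proof -
  have "b > 0"
  proof (rule ccontr)
    assume "\<not> b > 0"
    then have "b * exp (- (c * r)) \<le> 0"
      using mult_nonpos_nonneg[of b "exp (- (c * r))"] by simp
    then show False using assms by linarith
  qed
  then have "a / b \<le> exp (- (c * r))" using assms(2) by (simp add: divide_le_eq mult.commute)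
  then have "ln (a / b) \<le> - (c * r)"
    using ln_le_cancel_iff[of "a / b" "exp (- (c * r))"] assms(1) \<open>b > 0\<close> by simp
  then show ?thesis using assms(3) by (simp add: field_simps)
qed

lemma scaleC_zero_left: "(0::complex) *\<^sub>C x = 0"
  using scaleC_of_real[of 0 x] by simp

lemma scaleC_minus_one: "(-1) *\<^sub>C x = - x"
  using scaleC_of_real[of "-1" x] by simp

lemma scaleC_minus_right: "a *\<^sub>C (- x) = - (a *\<^sub>C x)"
proof -
  have "a *\<^sub>C (- x) = a *\<^sub>C ((-1) *\<^sub>C x)" by (simp add: scaleC_minus_one)
  also have "\<dots> = (-1) *\<^sub>C (a *\<^sub>C x)" by (simp add: scaleC_scaleC mult.commute)
  finally show ?thesis by (simp add: scaleC_minus_one)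
qed

lemma scaleC_diff_right: "a *\<^sub>C (x - y) = a *\<^sub>C x - a *\<^sub>C y"
  using scaleC_add_right[of a x "-y"] by (simp add: scaleC_minus_right)

lemma scaleC_scaleR_right: "a *\<^sub>C (r *\<^sub>R x) = r *\<^sub>R (a *\<^sub>C x)"
  by (simp add: scaleC_of_real[symmetric] scaleC_scaleC mult.commute)

lemma bounded_bilinear_scaleC: "bounded_bilinear (\<lambda>a (x::'a::complex_banach). a *\<^sub>C x)"
proof
  fix a a' :: complex and x x' :: 'a and r :: real
  show "(a + a') *\<^sub>C x = a *\<^sub>C x + a' *\<^sub>C x" by (rule scaleC_add_left)
  show "a *\<^sub>C (x + x') = a *\<^sub>C x + a *\<^sub>C x'" by (rule scaleC_add_right)
  show "(r *\<^sub>R a) *\<^sub>C x = r *\<^sub>R (a *\<^sub>C x)"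
    by (simp add: scaleR_conv_of_real scaleC_scaleC[symmetric] scaleC_of_real)
  show "a *\<^sub>C (r *\<^sub>R x) = r *\<^sub>R (a *\<^sub>C x)" by (rule scaleC_scaleR_right)
next
  show "\<exists>K. \<forall>a (x::'a). norm (a *\<^sub>C x) \<le> norm a * norm x * K"
    by (rule exI[of _ 1]) (simp add: norm_scaleC)
qed

lemma clinear_on_add:
  assumes "clinear_on D f" "x \<in> D" "y \<in> D"
  shows "x + y \<in> D" "f (x + y) = f x + f y"
  using assms by (auto simp: clinear_on_def)

lemma clinear_on_scaleC:
  assumes "clinear_on D f" "x \<in> D"
  shows "a *\<^sub>C x \<in> D" "f (a *\<^sub>C x) = a *\<^sub>C f x"
  using assms by (auto simp: clinear_on_def)

lemma clinear_on_diff: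
  assumes "clinear_on D f" "x \<in> D" "y \<in> D"
  shows "x - y \<in> D" "f (x - y) = f x - f y"
proof -
  have "(-1) *\<^sub>C y \<in> D" "f ((-1) *\<^sub>C y) = (-1) *\<^sub>C f y"
    using assms by (auto simp: clinear_on_def)
  moreover have "x - y = x + (-1) *\<^sub>C y" by (simp add: scaleC_minus_one)
  ultimately show "x - y \<in> D" "f (x - y) = f x - f y"
    using assms by (auto simp: clinear_on_def scaleC_minus_one)
qed

lemma bounded_clinear_op_imp_bounded_linear:
  assumes "bounded_clinear_op f"
  shows "bounded_linear f"
proof -
  obtain K where K: "\<And>x. norm (f x) \<le> K * norm x"
    using assms by (auto simp: bounded_clinear_op_def)
  have lin: "clinear_on UNIV f" using assms by (auto simp: bounded_clinear_op_def)
  show ?thesis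
  proof (rule bounded_linear_intro)
    show "f (x + y) = f x + f y" for x y using lin by (auto simp: clinear_on_def)
    show "f (r *\<^sub>R x) = r *\<^sub>R f x" for r x
      using lin by (auto simp: clinear_on_def scaleC_of_real[symmetric])
    show "norm (f x) \<le> norm x * K" for x using K[of x] by (simp add: mult.commute)
  qed
qed

lemma approx_point_spectrumE:
  assumes "l \<in> approx_point_spectrum T" "\<epsilon> > 0"
  obtains x where "x \<in> gen_dom T" "norm x = 1" "norm (l *\<^sub>C x - genA T x) < \<epsilon>"
proof -
  have "(INF x\<in>{x \<in> gen_dom T. norm x = 1}. ennreal (norm (l *\<^sub>C x - genA T x))) < ennreal \<epsilon>"
    using assms by (simp add: approx_point_spectrum_def)
  then show ?thesis using that by (auto simp: INF_less_iff ennreal_less_iff)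
qed

lemma obs_energy_mono: "\<tau> \<le> \<tau>' \<Longrightarrow> obs_energy T C \<tau> x \<le> obs_energy T C \<tau>' x"
  unfolding obs_energy_def by (intro nn_integral_mono) (auto simp: indicator_def)

lemma obs_M2_mono: "\<tau> \<le> \<tau>' \<Longrightarrow> obs_M2 T C \<tau> \<le> obs_M2 T C \<tau>'"
  unfolding obs_M2_def by (intro SUP_subset_mono) (auto intro: obs_energy_mono)

lemma obs_energy_le_obs_M2: "x \<in> gen_dom T \<Longrightarrow> norm x = 1 \<Longrightarrow> obs_energy T C \<tau> x \<le> obs_M2 T C \<tau>"
  unfolding obs_M2_def by (intro SUP_upper) auto

lemma obs_m2_le_obs_energy: "x \<in> gen_dom T \<Longrightarrow> norm x = 1 \<Longrightarrow> obs_m2 T C \<tau> \<le> obs_energy T C \<tau> x"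
  unfolding obs_m2_def by (intro INF_lower) auto

section \<open>Strongly continuous semigroups\<close>

context
  fixes T :: "real \<Rightarrow> 'a::complex_banach \<Rightarrow> 'a"
  assumes c0: "c0_semigroup T"
begin

lemma c0_bounded_linear: "t \<ge> 0 \<Longrightarrow> bounded_linear (T t)"
  using c0 bounded_clinear_op_imp_bounded_linear by (auto simp: c0_semigroup_def)

lemma c0_scaleC: "t \<ge> 0 \<Longrightarrow> T t (a *\<^sub>C x) = a *\<^sub>C T t x"
  using c0 by (auto simp: c0_semigroup_def bounded_clinear_op_def clinear_on_def)

lemma c0_zero: "T 0 x = x"
  using c0 by (auto simp: c0_semigroup_def)

lemma c0_compose: "t \<ge> 0 \<Longrightarrow> s \<ge> 0 \<Longrightarrow> T (t + s) x = T t (T s x)"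
  using c0 by (auto simp: c0_semigroup_def)

lemma c0_add: "t \<ge> 0 \<Longrightarrow> T t (x + y) = T t x + T t y"
  using c0_bounded_linear linear_add bounded_linear.linear by blast

lemma c0_diff: "t \<ge> 0 \<Longrightarrow> T t (x - y) = T t x - T t y"
  using c0_bounded_linear linear_diff bounded_linear.linear by blast

lemma c0_minus: "t \<ge> 0 \<Longrightarrow> T t (- x) = - T t x"
  using c0_bounded_linear linear_neg bounded_linear.linear by blast

lemma c0_scaleR: "t \<ge> 0 \<Longrightarrow> T t (r *\<^sub>R x) = r *\<^sub>R T t x"
  using c0_bounded_linear linear_scale bounded_linear.linear by blast

lemma c0_strong_continuity: "((\<lambda>t. T t x) \<longlongrightarrow> x) (at_right 0)"
  using c0 by (auto simp: c0_semigroup_def)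

lemma c0_strong_continuity_eps:
  assumes "e > 0"
  shows "\<exists>d>0. \<forall>h. 0 \<le> h \<and> h < d \<longrightarrow> norm (T h x - x) < e"
proof -
  have "eventually (\<lambda>t. dist (T t x) x < e) (at_right 0)"
    using c0_strong_continuity assms by (rule tendstoD)
  then obtain b where b: "b > 0" "\<And>y. y > 0 \<Longrightarrow> y < b \<Longrightarrow> dist (T y x) x < e"
    unfolding eventually_at_right[of 0 "1::real", simplified] by auto
  show ?thesis
  proof (intro exI[of _ b] conjI allI impI)
    fix h assume "0 \<le> h \<and> h < b"
    then show "norm (T h x - x) < e"
      using b assms by (cases "h = 0") (auto simp: c0_zero dist_norm)
  qed (use b in auto)
qed

lemma c0_tendsto_along_sequence:
  assumes "s \<longlonglongrightarrow> 0" "\<And>n. s n \<ge> 0"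
  shows "(\<lambda>n. T (s n) y) \<longlonglongrightarrow> y"
proof (rule LIMSEQ_I)
  fix r :: real assume "r > 0"
  then obtain d where d: "d > 0" "\<And>h. 0 \<le> h \<and> h < d \<longrightarrow> norm (T h y - y) < r"
    using c0_strong_continuity_eps by blast
  obtain N where N: "\<And>n. n \<ge> N \<Longrightarrow> s n < d"
    using order_tendstoD(2)[OF assms(1) d(1)] by (auto simp: eventually_sequentially)
  have "norm (T (s n) y - y) < r" if "n \<ge> N" for n
    using d(2)[of "s n"] assms(2)[of n] N[OF that] by simp
  then show "\<exists>N. \<forall>n\<ge>N. norm (T (s n) y - y) < r" by blast
qed

text \<open>Uniform boundedness applied to \<open>T (s n)\<close> along a sequence \<open>s n \<rightarrow> 0\<close>.\<close>
lemma c0_locally_bounded: "\<exists>\<delta>>0. \<exists>K. \<forall>s\<in>{0..\<delta>}. \<forall>x. norm (T s x) \<le> K * norm x"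
proof (rule ccontr)
  assume unbounded: "\<not> ?thesis"
  have "\<exists>s x. s \<in> {0..inverse (real (Suc n))} \<and> norm (T s x) > real n * norm x" for n
  proof -
    have "inverse (real (Suc n)) > 0" by simp
    then have "\<not> (\<forall>s\<in>{0..inverse (real (Suc n))}. \<forall>x. norm (T s x) \<le> real n * norm x)"
      using unbounded by blast
    then show ?thesis by (auto simp: not_le)
  qed
  then obtain s x where sx: "\<And>n. s n \<in> {0..inverse (real (Suc n))}"
    "\<And>n. norm (T (s n) (x n)) > real n * norm (x n)"
    by metis
  have "s \<longlonglongrightarrow> 0"
    by (rule tendsto_sandwich[of "\<lambda>_. 0" s sequentially "\<lambda>n. inverse (real (Suc n))"])
       (use sx(1) LIMSEQ_inverse_real_of_nat in auto)
  then have "(\<lambda>n. T (s n) y) \<longlonglongrightarrow> y" for y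
    using c0_tendsto_along_sequence sx(1) by simp
  then have "Bseq (\<lambda>n. T (s n) y)" for y by (rule convergent_imp_Bseq[OF convergentI])
  then have "\<exists>B. \<forall>n. norm (T (s n) y) \<le> B" for y unfolding Bseq_def by auto
  moreover have "bounded_linear (T (s n))" for n using sx(1)[of n] c0_bounded_linear by auto
  ultimately obtain K where K: "\<And>n x. norm (T (s n) x) \<le> K * norm x"
    using uniform_boundedness_sequence[of "\<lambda>n. T (s n)"] by blast
  obtain n :: nat where "K \<le> real n" using real_arch_simple by blast
  then have "K * norm (x n) \<le> real n * norm (x n)" by (simp add: mult_right_mono)
  then show False using K[of n "x n"] sx(2)[of n] by linarith
qed

lemma c0_bounded_on_interval: "\<exists>K\<ge>1. \<forall>s\<in>{0..\<eta>}. \<forall>x. norm (T s x) \<le> K * norm x"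
proof -
  obtain \<delta> K0 where \<delta>: "\<delta> > 0" "\<And>s x. s \<in> {0..\<delta>} \<Longrightarrow> norm (T s x) \<le> K0 * norm x"
    using c0_locally_bounded by blast
  define K where "K = max K0 1"
  have K: "norm (T s x) \<le> K * norm x" if "s \<in> {0..\<delta>}" for s x
    using \<delta>(2)[OF that, of x] by (smt (verit) K_def mult_right_mono norm_ge_zero)
  have K1: "K \<ge> 1" by (simp add: K_def)
  have iterate: "\<forall>s\<in>{0..real k * \<delta>}. \<forall>x. norm (T s x) \<le> K ^ (k + 1) * norm x" for k
  proof (induction k)
    case 0
    then show ?case using K1 by (auto simp: c0_zero intro: mult_right_mono[of 1 K, simplified])
  next
    case (Suc k)
    show ?case
    proof (intro ballI allI)
      fix s x assume s: "s \<in> {0..real (Suc k) * \<delta>}"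
      show "norm (T s x) \<le> K ^ (Suc k + 1) * norm x"
      proof (cases "s \<le> \<delta>")
        case True
        have "K \<le> K ^ (Suc k + 1)"
          using K1 mult_left_mono[OF one_le_power[OF K1, of "k + 1"], of K] by simp
        then show ?thesis using s True K[of s x] by (smt (verit) atLeastAtMost_iff mult_right_mono norm_ge_zero)
      next
        case False
        have "T s x = T \<delta> (T (s - \<delta>) x)" using c0_compose[of \<delta> "s - \<delta>" x] False \<delta>(1) by simp
        moreover have "s - \<delta> \<in> {0..real k * \<delta>}" using s False by (auto simp: algebra_simps)
        ultimately have "norm (T s x) \<le> K * (K ^ (k + 1) * norm x)"
          using K[of \<delta> "T (s - \<delta>) x"] Suc.IH \<delta>(1) K1
          by (smt (verit, ccfv_SIG) atLeastAtMost_iff mult_left_mono)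
        then show ?thesis by simp
      qed
    qed
  qed
  obtain k :: nat where "\<eta> / \<delta> \<le> real k" using real_arch_simple by blast
  then have "\<eta> \<le> real k * \<delta>" using \<delta>(1) by (simp add: divide_le_eq)
  moreover have "1 \<le> K ^ (k + 1)" using one_le_power[OF K1] by blast
  ultimately show ?thesis using iterate[of k] by (intro exI[of _ "K ^ (k + 1)"]) auto
qed

lemma c0_orbit_continuous:
  assumes t: "t \<ge> 0"
  shows "((\<lambda>s. T s x) \<longlongrightarrow> T t x) (at t within {0..})"
  unfolding tendsto_iff eventually_at
proof (intro allI impI)
  fix e :: real assume e: "e > 0"
  obtain K where K: "K \<ge> 1" "\<And>s x. s \<in> {0..t+1} \<Longrightarrow> norm (T s x) \<le> K * norm x"
    using c0_bounded_on_interval[of "t + 1"] by blast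
  obtain d where d: "d > 0" "\<And>h. 0 \<le> h \<and> h < d \<longrightarrow> norm (T h x - x) < e / K"
    using c0_strong_continuity_eps[of "e / K" x] e K(1) by auto
  have "dist (T s x) (T t x) < e" if s: "s \<ge> 0" "\<bar>s - t\<bar> < min d 1" for s
  proof -
    \<comment> \<open>write the later time as the earlier one shifted by \<open>\<bar>s - t\<bar>\<close>\<close>
    define a where "a = min s t"
    have a: "a \<ge> 0" "a \<in> {0..t+1}" using s t by (auto simp: a_def)
    have "norm (T s x - T t x) = norm (T a (T \<bar>s - t\<bar> x - x))"
      using c0_compose[of a "\<bar>s - t\<bar>" x] a(1)
      by (cases "t \<le> s") (auto simp: a_def c0_diff norm_minus_commute)
    also have "\<dots> \<le> K * norm (T \<bar>s - t\<bar> x - x)" using K(2)[OF a(2)] by simp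
    also have "\<dots> < K * (e / K)"
      using d(2)[of "\<bar>s - t\<bar>"] s K(1) by (intro mult_strict_left_mono) auto
    finally show ?thesis using K(1) by (simp add: dist_norm)
  qed
  then show "\<exists>d>0. \<forall>s\<in>{0..}. s \<noteq> t \<and> dist s t < d \<longrightarrow> dist (T s x) (T t x) < e"
    using d(1) by (intro exI[of _ "min d 1"]) (auto simp: dist_real_def)
qed

lemma gen_dom_genA_of_tendsto:
  assumes "((\<lambda>h. (1 / h) *\<^sub>R (T h z - z)) \<longlongrightarrow> y) (at_right 0)"
  shows "z \<in> gen_dom T" "genA T z = - y"
  using assms by (auto simp: gen_dom_def genA_def intro!: tendsto_Lim)

lemma tendsto_genA:
  assumes "x \<in> gen_dom T"
  shows "((\<lambda>h. (1 / h) *\<^sub>R (T h x - x)) \<longlongrightarrow> - genA T x) (at_right 0)"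
proof -
  obtain y where y: "((\<lambda>h. (1 / h) *\<^sub>R (T h x - x)) \<longlongrightarrow> y) (at_right 0)"
    using assms by (auto simp: gen_dom_def)
  then show ?thesis using gen_dom_genA_of_tendsto(2)[OF y] by simp
qed

lemma genA_commute:
  assumes x: "x \<in> gen_dom T" and t: "t \<ge> 0"
  shows "T t x \<in> gen_dom T" "genA T (T t x) = T t (genA T x)"
proof -
  have "((\<lambda>h. T t ((1 / h) *\<^sub>R (T h x - x))) \<longlongrightarrow> T t (- genA T x)) (at_right 0)"
    using bounded_linear.tendsto[OF c0_bounded_linear[OF t] tendsto_genA[OF x]] .
  moreover have "eventually (\<lambda>h. T t ((1 / h) *\<^sub>R (T h x - x)) = (1 / h) *\<^sub>R (T h (T t x) - T t x)) (at_right 0)"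
    unfolding eventually_at_right[of 0 "1::real", simplified]
  proof (intro exI[of _ 1] conjI allI impI)
    fix h :: real assume "0 < h"
    then have "T h (T t x) = T t (T h x)"
      using c0_compose[of h t x] c0_compose[of t h x] t by (simp add: add.commute)
    then show "T t ((1 / h) *\<^sub>R (T h x - x)) = (1 / h) *\<^sub>R (T h (T t x) - T t x)"
      using t by (simp add: c0_scaleR c0_diff)
  qed simp
  ultimately have "((\<lambda>h. (1 / h) *\<^sub>R (T h (T t x) - T t x)) \<longlongrightarrow> T t (- genA T x)) (at_right 0)"
    by (rule Lim_transform_eventually)
  from gen_dom_genA_of_tendsto[OF this]
  show "T t x \<in> gen_dom T" "genA T (T t x) = T t (genA T x)" using t by (simp_all add: c0_minus)
qed

lemma gen_dom_add:
  assumes "x \<in> gen_dom T" "y \<in> gen_dom T"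
  shows "x + y \<in> gen_dom T" "genA T (x + y) = genA T x + genA T y"
proof -
  have "((\<lambda>h. (1 / h) *\<^sub>R (T h x - x) + (1 / h) *\<^sub>R (T h y - y)) \<longlongrightarrow> - genA T x + - genA T y) (at_right 0)"
    by (intro tendsto_add tendsto_genA assms)
  moreover have "eventually (\<lambda>h. (1 / h) *\<^sub>R (T h x - x) + (1 / h) *\<^sub>R (T h y - y) = (1 / h) *\<^sub>R (T h (x + y) - (x + y))) (at_right 0)"
    unfolding eventually_at_right[of 0 "1::real", simplified]
    by (intro exI[of _ 1]) (auto simp: c0_add algebra_simps)
  ultimately have "((\<lambda>h. (1 / h) *\<^sub>R (T h (x + y) - (x + y))) \<longlongrightarrow> - genA T x + - genA T y) (at_right 0)"
    by (rule Lim_transform_eventually)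
  from gen_dom_genA_of_tendsto[OF this]
  show "x + y \<in> gen_dom T" "genA T (x + y) = genA T x + genA T y" by simp_all
qed

lemma gen_dom_scaleC:
  assumes "x \<in> gen_dom T"
  shows "a *\<^sub>C x \<in> gen_dom T" "genA T (a *\<^sub>C x) = a *\<^sub>C genA T x"
proof -
  have "((\<lambda>h. a *\<^sub>C ((1 / h) *\<^sub>R (T h x - x))) \<longlongrightarrow> a *\<^sub>C (- genA T x)) (at_right 0)"
    by (intro bounded_bilinear.tendsto[OF bounded_bilinear_scaleC] tendsto_const tendsto_genA assms)
  moreover have "eventually (\<lambda>h. a *\<^sub>C ((1 / h) *\<^sub>R (T h x - x)) = (1 / h) *\<^sub>R (T h (a *\<^sub>C x) - a *\<^sub>C x)) (at_right 0)"
    unfolding eventually_at_right[of 0 "1::real", simplified]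
    by (intro exI[of _ 1]) (auto simp: c0_scaleC scaleC_scaleR_right scaleC_diff_right)
  ultimately have "((\<lambda>h. (1 / h) *\<^sub>R (T h (a *\<^sub>C x) - a *\<^sub>C x)) \<longlongrightarrow> a *\<^sub>C (- genA T x)) (at_right 0)"
    by (rule Lim_transform_eventually)
  from gen_dom_genA_of_tendsto[OF this]
  show "a *\<^sub>C x \<in> gen_dom T" "genA T (a *\<^sub>C x) = a *\<^sub>C genA T x" by (simp_all add: scaleC_minus_right)
qed

lemma gen_dom_diff:
  assumes "x \<in> gen_dom T" "y \<in> gen_dom T"
  shows "x - y \<in> gen_dom T" "genA T (x - y) = genA T x - genA T y"
  using gen_dom_add[OF assms(1), of "(-1) *\<^sub>C y"] gen_dom_scaleC[OF assms(2), of "-1"]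
  by (simp_all add: scaleC_minus_one)

lemma c0_increment_eq:
  assumes "a \<ge> 0" "h > 0"
  shows "T (a + h) x - T a x - h *\<^sub>R z = h *\<^sub>R (T a ((1 / h) *\<^sub>R (T h x - x) - y) + (T a y - z))"
proof -
  have "T a ((1 / h) *\<^sub>R (T h x - x) - y) = (1 / h) *\<^sub>R (T (a + h) x - T a x) - T a y"
    using assms c0_compose[of a h x] by (simp add: c0_diff c0_scaleR)
  then have "T (a + h) x - T a x = h *\<^sub>R (T a ((1 / h) *\<^sub>R (T h x - x) - y) + T a y)"
    using assms(2) by simp
  then show ?thesis by (simp add: algebra_simps)
qed

lemma orbit_has_vector_derivative:
  assumes x: "x \<in> gen_dom T" and t: "t \<ge> 0"
  shows "((\<lambda>s. T s x) has_vector_derivative T t (- genA T x)) (at t within {0..})"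
proof -
  define y where "y = - genA T x"
  define D where "D h = (1 / h) *\<^sub>R (T h x - x)" for h
  obtain K where K: "K \<ge> 1" "\<And>s x. s \<in> {0..t+1} \<Longrightarrow> norm (T s x) \<le> K * norm x"
    using c0_bounded_on_interval[of "t + 1"] by blast
  have small_quotient: "\<exists>d>0. \<forall>s\<in>{0..}. s \<noteq> t \<and> dist s t < d \<longrightarrow>
      norm (T s x - T t x - (s - t) *\<^sub>R T t y) / norm (s - t) < e" if e: "e > 0" for e
  proof -
    have "eventually (\<lambda>h. dist (D h) y < e / (2 * K)) (at_right 0)"
      using tendstoD[OF tendsto_genA[OF x], of "e / (2 * K)"] e K(1) by (simp add: D_def y_def)
    then obtain d1 where d1: "d1 > 0" "\<And>h. h > 0 \<Longrightarrow> h < d1 \<Longrightarrow> norm (D h - y) < e / (2 * K)"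
      unfolding eventually_at_right[of 0 "1::real", simplified] by (auto simp: dist_norm)
    have "eventually (\<lambda>s. dist (T s y) (T t y) < e / 2) (at t within {0..})"
      using tendstoD[OF c0_orbit_continuous[OF t, of y], of "e / 2"] e by simp
    then obtain d2 where d2: "d2 > 0"
      "\<And>s. s \<in> {0..} \<Longrightarrow> s \<noteq> t \<Longrightarrow> dist s t < d2 \<Longrightarrow> norm (T s y - T t y) < e / 2"
      unfolding eventually_at by (auto simp: dist_norm)
    have "norm (T s x - T t x - (s - t) *\<^sub>R T t y) / norm (s - t) < e"
      if s: "s \<ge> 0" "s \<noteq> t" "\<bar>s - t\<bar> < min (min d1 d2) 1" for s
    proof -
      \<comment> \<open>both one-sided quotients are increments of the orbit starting at \<open>min s t\<close>\<close>
      define a where "a = min s t"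
      define h where "h = \<bar>s - t\<bar>"
      have a: "a \<ge> 0" "a \<in> {0..t+1}" "a + h = max s t" using s t by (auto simp: a_def h_def)
      have h: "h > 0" "h < d1" using s by (auto simp: h_def)
      have "norm (T s x - T t x - (s - t) *\<^sub>R T t y) = norm (T (a + h) x - T a x - h *\<^sub>R T t y)"
        using s by (cases "t \<le> s") (auto simp: a_def h_def norm_minus_commute algebra_simps)
      also have "\<dots> = norm (h *\<^sub>R (T a (D h - y) + (T a y - T t y)))"
        by (simp only: c0_increment_eq[OF a(1) h(1), where y = y] D_def)
      also have "\<dots> = h * norm (T a (D h - y) + (T a y - T t y))" using h(1) by simp
      also have "\<dots> \<le> h * (K * norm (D h - y) + norm (T a y - T t y))"
        using K(2)[OF a(2), of "D h - y"] h(1)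
        by (intro mult_left_mono) (auto intro: order_trans[OF norm_triangle_ineq])
      also have "\<dots> < h * e"
      proof -
        have "K * norm (D h - y) < e / 2" using d1(2)[OF h] K(1) by (simp add: field_simps)
        moreover have "norm (T a y - T t y) < e / 2"
          using d2(2)[of a] e s a(1) by (cases "a = t") (auto simp: a_def dist_real_def)
        ultimately show ?thesis using h(1) by (intro mult_strict_left_mono) auto
      qed
      finally show ?thesis using h(1) by (simp add: h_def field_simps)
    qed
    then show ?thesis using d1(1) d2(1) by (intro exI[of _ "min (min d1 d2) 1"]) (auto simp: dist_real_def)
  qed
  show ?thesis
    unfolding has_vector_derivative_def has_derivative_iff_norm
  proof
    show "bounded_linear (\<lambda>h. h *\<^sub>R T t (- genA T x))" by (rule bounded_linear_scaleR_left)
    show "((\<lambda>s. norm (T s x - T t x - (s - t) *\<^sub>R T t (- genA T x)) / norm (s - t)) \<longlongrightarrow> 0) (at t within {0..})"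
      unfolding tendsto_iff eventually_at using small_quotient by (simp add: y_def)
  qed
qed

lemma weighted_orbit_has_vector_derivative:
  assumes x: "x \<in> gen_dom T" and s: "s \<ge> 0"
  shows "((\<lambda>s. exp (s *\<^sub>R l) *\<^sub>C T s x) has_vector_derivative
           exp (s *\<^sub>R l) *\<^sub>C T s (l *\<^sub>C x - genA T x)) (at s within {0..})"
proof -
  have "((\<lambda>s. exp (s *\<^sub>R l) *\<^sub>C T s x) has_vector_derivative
      exp (s *\<^sub>R l) *\<^sub>C T s (- genA T x) + (exp (s *\<^sub>R l) * l) *\<^sub>C T s x) (at s within {0..})"
    by (rule bounded_bilinear.has_vector_derivative[OF bounded_bilinear_scaleC
          exp_scaleR_has_vector_derivative_right orbit_has_vector_derivative[OF x s]])
  moreover have "exp (s *\<^sub>R l) *\<^sub>C T s (- genA T x) + (exp (s *\<^sub>R l) * l) *\<^sub>C T s x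
      = exp (s *\<^sub>R l) *\<^sub>C T s (l *\<^sub>C x - genA T x)"
    using s by (simp add: c0_diff c0_minus c0_scaleC scaleC_diff_right scaleC_minus_right
        scaleC_scaleC[symmetric])
  ultimately show ?thesis by simp
qed

text \<open>Mean value inequality for \<open>s \<mapsto> exp (s l) T s x\<close>, whose derivative is
  \<open>exp (s l) T s (l x - A x)\<close>.\<close>
lemma approximate_eigenvector_estimate:
  assumes x: "x \<in> gen_dom T" and \<eta>: "\<eta> \<ge> 0" and l: "Re l \<ge> 0"
    and K: "\<And>s z. s \<in> {0..\<eta>} \<Longrightarrow> norm (T s z) \<le> K * norm z"
  shows "norm (T \<eta> x - exp (- (complex_of_real \<eta> * l)) *\<^sub>C x) \<le> \<eta> * K * norm (l *\<^sub>C x - genA T x)"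
proof -
  define w where "w = l *\<^sub>C x - genA T x"
  define g where "g s = exp (s *\<^sub>R l) *\<^sub>C T s x" for s
  have bound: "onorm (\<lambda>h. h *\<^sub>R (exp (s *\<^sub>R l) *\<^sub>C T s w)) \<le> exp (\<eta> * Re l) * K * norm w"
    if s: "s \<in> {0..\<eta>}" for s
  proof -
    have "onorm (\<lambda>h. h *\<^sub>R (exp (s *\<^sub>R l) *\<^sub>C T s w)) = exp (s * Re l) * norm (T s w)"
      by (simp add: onorm_scaleR_vector norm_scaleC)
    also have "\<dots> \<le> exp (\<eta> * Re l) * (K * norm w)"
      using s l K[OF s, of w] by (intro mult_mono) (auto intro: mult_right_mono)
    finally show ?thesis by simp
  qed
  have "(g has_vector_derivative exp (s *\<^sub>R l) *\<^sub>C T s w) (at s within {0..\<eta>})"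
    if "s \<in> {0..\<eta>}" for s
    unfolding g_def w_def
    by (rule has_vector_derivative_within_subset[OF weighted_orbit_has_vector_derivative[OF x]])
       (use that in auto)
  then have "norm (g \<eta> - g 0) \<le> exp (\<eta> * Re l) * K * norm w * norm (\<eta> - 0)"
    using bound \<eta>
    by (intro differentiable_bound[of "{0..\<eta>}" g "\<lambda>s h. h *\<^sub>R (exp (s *\<^sub>R l) *\<^sub>C T s w)"])
       (auto simp: has_vector_derivative_def)
  then have g_bound: "norm (g \<eta> - x) \<le> exp (\<eta> * Re l) * K * norm w * \<eta>"
    using \<eta> by (simp add: g_def c0_zero scaleC_one)
  define c where "c = exp (- (complex_of_real \<eta> * l))"
  have "T \<eta> x - c *\<^sub>C x = c *\<^sub>C (g \<eta> - x)"
    by (simp add: c_def g_def scaleC_diff_right scaleC_scaleC scaleR_conv_of_real exp_minus scaleC_one)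
  then have "norm (T \<eta> x - c *\<^sub>C x) = exp (- (\<eta> * Re l)) * norm (g \<eta> - x)"
    by (simp add: norm_scaleC c_def)
  also have "\<dots> \<le> exp (- (\<eta> * Re l)) * (exp (\<eta> * Re l) * K * norm w * \<eta>)"
    using g_bound by (intro mult_left_mono) auto
  also have "\<dots> = \<eta> * K * norm w" by (simp add: exp_minus field_simps)
  finally show ?thesis by (simp add: c_def w_def)
qed

section \<open>Observation energy\<close>

context
  fixes C :: "'a \<Rightarrow> 'b::complex_banach"
  assumes obs: "obs_operator T C"
begin

lemma obs_clinear: "clinear_on (gen_dom T) C"
  using obs by (simp add: obs_operator_def)

lemma continuous_on_observed_orbit:
  assumes x: "x \<in> gen_dom T"
  shows "continuous_on {0..} (\<lambda>t. C (T t x))"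
  unfolding continuous_on_def
proof (intro ballI)
  fix t :: real assume "t \<in> {0..}"
  then have t: "t \<ge> 0" by simp
  obtain K where K: "\<And>z. z \<in> gen_dom T \<Longrightarrow> norm (C z) \<le> K * (norm z + norm (genA T z))"
    using obs by (auto simp: obs_operator_def)
  \<comment> \<open>\<open>C\<close> is continuous for the graph norm, and both \<open>T s x\<close> and \<open>A (T s x) = T s (A x)\<close> are continuous in \<open>s\<close>\<close>
  define f where "f s = norm (T s x - T t x) + norm (T s (genA T x) - T t (genA T x))" for s
  have "(f \<longlongrightarrow> 0) (at t within {0..})"
    unfolding f_def
    using tendsto_add[OF tendsto_norm_zero[OF LIM_zero[OF c0_orbit_continuous[OF t, of x]]]
        tendsto_norm_zero[OF LIM_zero[OF c0_orbit_continuous[OF t, of "genA T x"]]]] by simp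
  moreover have "norm (C (T s x) - C (T t x)) \<le> norm (f s) * max K 0" if s: "s \<ge> 0" for s
  proof -
    have D: "T s x \<in> gen_dom T" "T t x \<in> gen_dom T" using genA_commute(1)[OF x] s t by auto
    then have "T s x - T t x \<in> gen_dom T"
      and A: "genA T (T s x - T t x) = T s (genA T x) - T t (genA T x)"
      using gen_dom_diff[OF D] genA_commute(2)[OF x] s t by auto
    then have "norm (C (T s x - T t x)) \<le> K * f s" using K[of "T s x - T t x"] by (simp add: f_def)
    also have "\<dots> \<le> norm (f s) * max K 0"
      using mult_right_mono[of K "max K 0" "f s"] by (simp add: f_def mult.commute)
    finally show ?thesis using clinear_on_diff(2)[OF obs_clinear D] by simp
  qed
  then have "eventually (\<lambda>s. norm (C (T s x) - C (T t x)) \<le> norm (f s) * max K 0) (at t within {0..})"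
    by (auto simp: eventually_at_filter)
  ultimately have "((\<lambda>s. C (T s x) - C (T t x)) \<longlongrightarrow> 0) (at t within {0..})"
    by (rule tendsto_0_le)
  then show "((\<lambda>s. C (T s x)) \<longlongrightarrow> C (T t x)) (at t within {0..})"
    by (simp add: LIM_zero_iff)
qed

lemma observed_orbit_measurable:
  assumes x: "x \<in> gen_dom T" and S: "S \<subseteq> {0..}" "S \<in> sets borel"
  shows "(\<lambda>t. ennreal ((norm (C (T t x)))\<^sup>2) * indicator S t) \<in> borel_measurable borel"
proof -
  define h where "h t = indicator {0..} t *\<^sub>R C (T t x)" for t :: real
  have [measurable]: "h \<in> borel_measurable borel"
    unfolding h_def by (rule borel_measurable_continuous_on_indicator[OF _ continuous_on_observed_orbit[OF x]]) auto
  have [measurable]: "S \<in> sets borel" by (rule S(2))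
  have "(\<lambda>t. ennreal ((norm (C (T t x)))\<^sup>2) * indicator S t) = (\<lambda>t. ennreal ((norm (h t))\<^sup>2) * indicator S t)"
    using S(1) by (intro ext) (auto simp: h_def indicator_def)
  also have "\<dots> \<in> borel_measurable borel" by measurable
  finally show ?thesis .
qed

lemma obs_energy_split:
  assumes x: "x \<in> gen_dom T" and a: "a \<ge> 0" and b: "b \<ge> 0"
  shows "obs_energy T C (a + b) x \<le> obs_energy T C a x + obs_energy T C b (T a x)"
proof -
  define F where "F t = ennreal ((norm (C (T t x)))\<^sup>2)" for t
  have m1: "(\<lambda>t. F t * indicator {0..a} t) \<in> borel_measurable lborel"
    using observed_orbit_measurable[OF x, of "{0..a}"] by (simp add: F_def)
  have m2: "(\<lambda>t. F t * indicator {a..a+b} t) \<in> borel_measurable borel"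
    using observed_orbit_measurable[OF x, of "{a..a+b}"] a by (simp add: F_def)
  have "obs_energy T C (a + b) x = (\<integral>\<^sup>+t. F t * indicator {0..a+b} t \<partial>lborel)"
    by (simp add: obs_energy_def F_def)
  also have "\<dots> \<le> (\<integral>\<^sup>+t. F t * indicator {0..a} t + F t * indicator {a..a+b} t \<partial>lborel)"
    by (intro nn_integral_mono) (auto simp: indicator_def)
  also have "\<dots> = (\<integral>\<^sup>+t. F t * indicator {0..a} t \<partial>lborel) + (\<integral>\<^sup>+t. F t * indicator {a..a+b} t \<partial>lborel)"
    using m1 m2 by (intro nn_integral_add) auto
  also have "(\<integral>\<^sup>+t. F t * indicator {0..a} t \<partial>lborel) = obs_energy T C a x"
    by (simp add: obs_energy_def F_def)
  also have "(\<integral>\<^sup>+t. F t * indicator {a..a+b} t \<partial>lborel)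
      = (\<integral>\<^sup>+s. F (a + 1 * s) * indicator {a..a+b} (a + 1 * s) \<partial>lborel)"
    using nn_integral_real_affine[OF m2, of 1 a] by simp
  also have "\<dots> = obs_energy T C b (T a x)"
    unfolding obs_energy_def
  proof (intro nn_integral_cong)
    fix s :: real
    have "T (a + s) x = T s (T a x)" if "s \<ge> 0"
      using c0_compose[of s a x] a that by (simp add: add.commute)
    then show "F (a + 1 * s) * indicator {a..a+b} (a + 1 * s)
        = ennreal ((norm (C (T s (T a x))))\<^sup>2) * indicator {0..b} s"
      by (auto simp: F_def indicator_def)
  qed
  finally show ?thesis by simp
qed

lemma obs_energy_scaleC:
  assumes x: "x \<in> gen_dom T"
  shows "obs_energy T C \<tau> (c *\<^sub>C x) = ennreal ((cmod c)\<^sup>2) * obs_energy T C \<tau> x"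
proof -
  have m: "(\<lambda>t. ennreal ((norm (C (T t x)))\<^sup>2) * indicator {0..\<tau>} t) \<in> borel_measurable lborel"
    using observed_orbit_measurable[OF x, of "{0..\<tau>}"] by simp
  have "C (T t (c *\<^sub>C x)) = c *\<^sub>C C (T t x)" if "t \<ge> 0" for t
    using c0_scaleC[OF that] clinear_on_scaleC(2)[OF obs_clinear genA_commute(1)[OF x that]] by simp
  then have "obs_energy T C \<tau> (c *\<^sub>C x)
      = (\<integral>\<^sup>+t. ennreal ((cmod c)\<^sup>2) * (ennreal ((norm (C (T t x)))\<^sup>2) * indicator {0..\<tau>} t) \<partial>lborel)"
    unfolding obs_energy_def
    by (intro nn_integral_cong)
       (auto simp: indicator_def norm_scaleC power_mult_distrib ennreal_mult)
  also have "\<dots> = ennreal ((cmod c)\<^sup>2) * obs_energy T C \<tau> x"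
    using m by (simp add: nn_integral_cmult obs_energy_def)
  finally show ?thesis .
qed

lemma obs_energy_le_norm:
  assumes x: "x \<in> gen_dom T"
  shows "obs_energy T C \<tau> x \<le> obs_M2 T C \<tau> * ennreal ((norm x)\<^sup>2)"
proof (cases "x = 0")
  case True
  then show ?thesis using obs_energy_scaleC[OF x, of \<tau> 0] by (simp add: scaleC_zero_left)
next
  case False
  define u where "u = complex_of_real (1 / norm x) *\<^sub>C x"
  have u: "u \<in> gen_dom T" "norm u = 1"
    using False clinear_on_scaleC(1)[OF obs_clinear x] by (auto simp: u_def norm_scaleC norm_divide)
  have "x = complex_of_real (norm x) *\<^sub>C u"
    using False by (simp add: u_def scaleC_scaleC scaleC_one flip: of_real_mult)
  then have "obs_energy T C \<tau> x = ennreal ((norm x)\<^sup>2) * obs_energy T C \<tau> u"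
    using obs_energy_scaleC[OF u(1), of \<tau> "complex_of_real (norm x)"] by simp
  moreover have "obs_energy T C \<tau> u \<le> obs_M2 T C \<tau>" by (rule obs_energy_le_obs_M2[OF u])
  ultimately show ?thesis by (simp add: mult.commute mult_right_mono)
qed

lemma obs_energy_add_le:
  assumes u: "u \<in> gen_dom T" and v: "v \<in> gen_dom T"
  shows "obs_energy T C \<tau> (u + v) \<le> 2 * obs_energy T C \<tau> u + 2 * obs_energy T C \<tau> v"
proof -
  have "(\<lambda>t. ennreal ((norm (C (T t z)))\<^sup>2) * indicator {0..\<tau>} t) \<in> borel_measurable lborel"
    if "z \<in> gen_dom T" for z
    using observed_orbit_measurable[OF that, of "{0..\<tau>}"] by simp
  note measurable = this[OF u] this[OF v]
  have pointwise: "(norm (C (T t (u + v))))\<^sup>2 \<le> 2 * (norm (C (T t u)))\<^sup>2 + 2 * (norm (C (T t v)))\<^sup>2"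
    if "t \<ge> 0" for t
    using c0_add[OF that] clinear_on_add(2)[OF obs_clinear genA_commute(1)[OF u that] genA_commute(1)[OF v that]]
      norm_add_squared_le by metis
  have pointwise_ennreal: "ennreal ((norm (C (T t (u + v))))\<^sup>2)
      \<le> 2 * ennreal ((norm (C (T t u)))\<^sup>2) + 2 * ennreal ((norm (C (T t v)))\<^sup>2)" if "t \<ge> 0" for t
  proof -
    have "ennreal ((norm (C (T t (u + v))))\<^sup>2)
        \<le> ennreal (2 * (norm (C (T t u)))\<^sup>2 + 2 * (norm (C (T t v)))\<^sup>2)"
      by (rule ennreal_leI[OF pointwise[OF that]])
    then show ?thesis by (simp add: ennreal_plus ennreal_mult)
  qed
  have "obs_energy T C \<tau> (u + v) \<le> (\<integral>\<^sup>+t. 2 * (ennreal ((norm (C (T t u)))\<^sup>2) * indicator {0..\<tau>} t)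
        + 2 * (ennreal ((norm (C (T t v)))\<^sup>2) * indicator {0..\<tau>} t) \<partial>lborel)"
    unfolding obs_energy_def
    by (intro nn_integral_mono) (auto simp: indicator_def intro: pointwise_ennreal)
  also have "\<dots> = 2 * obs_energy T C \<tau> u + 2 * obs_energy T C \<tau> v"
    using measurable by (simp add: nn_integral_add nn_integral_cmult obs_energy_def)
  finally show ?thesis .
qed

lemma obs_M2_add_le:
  assumes a: "a \<ge> 0" and b: "b \<ge> 0" and K: "\<And>z. norm (T a z) \<le> K * norm z"
  shows "obs_M2 T C (a + b) \<le> obs_M2 T C a + obs_M2 T C b * ennreal (K\<^sup>2)"
  unfolding obs_M2_def[of T C "a + b"]
proof (intro SUP_least)
  fix x assume "x \<in> {x \<in> gen_dom T. norm x = 1}"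
  then have x: "x \<in> gen_dom T" "norm x = 1" by auto
  have "obs_energy T C (a + b) x \<le> obs_energy T C a x + obs_energy T C b (T a x)"
    using obs_energy_split[OF x(1) a b] .
  also have "obs_energy T C a x \<le> obs_M2 T C a" by (rule obs_energy_le_obs_M2[OF x])
  also have "obs_energy T C b (T a x) \<le> obs_M2 T C b * ennreal ((norm (T a x))\<^sup>2)"
    using obs_energy_le_norm[OF genA_commute(1)[OF x(1) a]] .
  also have "ennreal ((norm (T a x))\<^sup>2) \<le> ennreal (K\<^sup>2)"
    using K[of x] x(2) by (intro ennreal_leI power_mono) auto
  finally show "obs_energy T C (a + b) x \<le> obs_M2 T C a + obs_M2 T C b * ennreal (K\<^sup>2)"
    by (simp add: add_left_mono mult_left_mono)
qed

lemma admissible_obs_M2_finite: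
  assumes "admissible T C"
  shows "obs_M2 T C \<tau> < \<infinity>"
proof -
  obtain \<tau>0 where \<tau>0: "\<tau>0 > 0" "obs_M2 T C \<tau>0 < \<infinity>"
    using assms by (auto simp: admissible_def)
  obtain K where "\<forall>s\<in>{0..\<tau>0}. \<forall>z. norm (T s z) \<le> K * norm z"
    using c0_bounded_on_interval by blast
  then have K: "\<And>z. norm (T \<tau>0 z) \<le> K * norm z" using \<tau>0(1) by simp
  have multiples: "obs_M2 T C (real n * \<tau>0) < \<infinity>" for n
  proof (induction n)
    case 0
    then show ?case using \<tau>0 obs_M2_mono[of 0 \<tau>0 T C] by (simp add: le_less_trans)
  next
    case (Suc n)
    have "obs_M2 T C (real (Suc n) * \<tau>0) \<le> obs_M2 T C \<tau>0 + obs_M2 T C (real n * \<tau>0) * ennreal (K\<^sup>2)"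
      using obs_M2_add_le[of \<tau>0 "real n * \<tau>0" K] \<tau>0(1) K by (simp add: algebra_simps)
    also have "\<dots> < \<infinity>" using \<tau>0 Suc.IH by (simp add: ennreal_mult_less_top)
    finally show ?case .
  qed
  obtain n :: nat where "\<tau> / \<tau>0 \<le> real n" using real_arch_simple by blast
  then have "\<tau> \<le> real n * \<tau>0" using \<tau>0(1) by (simp add: divide_le_eq)
  then show ?thesis using obs_M2_mono multiples[of n] by (blast intro: le_less_trans)
qed

text \<open>Split the window \<open>[0, \<tau>]\<close> at \<open>\<eta>\<close> and compare \<open>T \<eta> x\<close> with the multiple \<open>c x\<close>.\<close>
lemma obs_m2_le_split:
  assumes x: "x \<in> gen_dom T" "norm x = 1" and \<eta>: "0 \<le> \<eta>" "\<eta> \<le> \<tau>"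
  shows "obs_m2 T C \<tau> \<le> obs_M2 T C \<eta> + ennreal (2 * (cmod c)\<^sup>2) * obs_M2 T C (\<tau> - \<eta>)
           + ennreal (2 * (norm (T \<eta> x - c *\<^sub>C x))\<^sup>2) * obs_M2 T C (\<tau> - \<eta>)"
proof -
  define b where "b = \<tau> - \<eta>"
  define d where "d = T \<eta> x - c *\<^sub>C x"
  have b: "b \<ge> 0" using \<eta> by (simp add: b_def)
  have cx: "c *\<^sub>C x \<in> gen_dom T" using gen_dom_scaleC(1)[OF x(1)] .
  have d: "d \<in> gen_dom T" unfolding d_def using gen_dom_diff(1)[OF genA_commute(1)[OF x(1) \<eta>(1)] cx] .
  have "obs_m2 T C \<tau> \<le> obs_energy T C (\<eta> + b) x"
    using obs_m2_le_obs_energy[OF x] by (simp add: b_def)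
  also have "\<dots> \<le> obs_energy T C \<eta> x + obs_energy T C b (c *\<^sub>C x + d)"
    using obs_energy_split[OF x(1) \<eta>(1) b] by (simp add: d_def)
  also have "obs_energy T C \<eta> x \<le> obs_M2 T C \<eta>" by (rule obs_energy_le_obs_M2[OF x])
  also have "obs_energy T C b (c *\<^sub>C x + d) \<le> 2 * obs_energy T C b (c *\<^sub>C x) + 2 * obs_energy T C b d"
    by (rule obs_energy_add_le[OF cx d])
  also have "obs_energy T C b (c *\<^sub>C x) = ennreal ((cmod c)\<^sup>2) * obs_energy T C b x"
    by (rule obs_energy_scaleC[OF x(1)])
  also have "obs_energy T C b x \<le> obs_M2 T C b" by (rule obs_energy_le_obs_M2[OF x])
  also have "obs_energy T C b d \<le> obs_M2 T C b * ennreal ((norm d)\<^sup>2)"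
    by (rule obs_energy_le_norm[OF d])
  finally have "obs_m2 T C \<tau> \<le> obs_M2 T C \<eta>
      + (2 * (ennreal ((cmod c)\<^sup>2) * obs_M2 T C b) + 2 * (obs_M2 T C b * ennreal ((norm d)\<^sup>2)))"
    by (simp add: add_left_mono mult_left_mono add_mono)
  moreover have "2 * (ennreal ((cmod c)\<^sup>2) * obs_M2 T C b) = ennreal (2 * (cmod c)\<^sup>2) * obs_M2 T C b"
    by (simp add: ennreal_mult mult.assoc)
  moreover have "2 * (obs_M2 T C b * ennreal ((norm d)\<^sup>2)) = ennreal (2 * (norm d)\<^sup>2) * obs_M2 T C b"
    by (simp add: ennreal_mult mult_ac)
  ultimately show ?thesis by (simp add: b_def d_def add.assoc)
qed

lemma approximate_eigenvalue_energy_bound: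
  assumes adm: "admissible T C" and \<eta>: "0 < \<eta>" "\<eta> < \<tau>"
    and l: "l \<in> approx_point_spectrum T" "Re l \<ge> 0"
  shows "obs_m2 T C \<tau> \<le> obs_M2 T C \<eta> + ennreal (2 * exp (- (2 * \<eta> * Re l))) * obs_M2 T C (\<tau> - \<eta>)"
proof (rule ennreal_le_epsilon)
  fix e :: real assume e: "e > 0"
  obtain K where K: "K \<ge> 1" "\<And>s z. s \<in> {0..\<eta>} \<Longrightarrow> norm (T s z) \<le> K * norm z"
    using c0_bounded_on_interval by blast
  obtain M where M: "obs_M2 T C (\<tau> - \<eta>) = ennreal M" "M \<ge> 0"
    using admissible_obs_M2_finite[OF adm, of "\<tau> - \<eta>"] by (cases "obs_M2 T C (\<tau> - \<eta>)") auto
  define \<epsilon> where "\<epsilon> = sqrt (e / (2 * M + 1)) / (\<eta> * K)"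
  have "\<epsilon> > 0" using e \<eta> K M by (simp add: \<epsilon>_def add_nonneg_pos)
  then obtain x where x: "x \<in> gen_dom T" "norm x = 1" "norm (l *\<^sub>C x - genA T x) < \<epsilon>"
    using approx_point_spectrumE[OF l(1)] by blast
  define c where "c = exp (- (complex_of_real \<eta> * l))"
  have "norm (T \<eta> x - c *\<^sub>C x) \<le> \<eta> * K * \<epsilon>"
    using approximate_eigenvector_estimate[OF x(1) _ l(2) K(2)] x(3) \<eta> K(1)
    by (smt (verit) c_def mult_left_mono mult_pos_pos)
  then have "(norm (T \<eta> x - c *\<^sub>C x))\<^sup>2 \<le> e / (2 * M + 1)"
    using power_mono[of _ "\<eta> * K * \<epsilon>" 2] \<eta> K(1) e M(2) by (simp add: \<epsilon>_def power_divide)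
  then have "2 * (norm (T \<eta> x - c *\<^sub>C x))\<^sup>2 * M \<le> e"
    using e M(2) by (simp add: field_simps) (smt (verit) mult_left_mono zero_le_power2)
  then have "ennreal (2 * (norm (T \<eta> x - c *\<^sub>C x))\<^sup>2) * obs_M2 T C (\<tau> - \<eta>) \<le> ennreal e"
    using M by (simp add: ennreal_mult[symmetric] ennreal_leI)
  moreover have "(cmod c)\<^sup>2 = exp (- (2 * \<eta> * Re l))"
    by (simp add: c_def power2_eq_square exp_add[symmetric])
  ultimately show "obs_m2 T C \<tau> \<le> obs_M2 T C \<eta> + ennreal (2 * exp (- (2 * \<eta> * Re l))) * obs_M2 T C (\<tau> - \<eta>) + ennreal e"
    using obs_m2_le_split[OF x(1,2), of \<eta> \<tau> c] \<eta> by (auto intro: order_trans add_left_mono)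
qed

lemma BFC_system_bdd_above_Re:
  assumes "BFC_system T C"
  shows "bdd_above (Re ` approx_point_spectrum T)"
proof -
  obtain \<eta> \<tau> where \<eta>: "0 < \<eta>" "\<eta> < \<tau>" and adm: "admissible T C"
    and gap: "obs_M2 T C \<eta> < obs_m2 T C \<tau>"
    using assms by (auto simp: BFC_system_def)
  define m where "m = enn2real (obs_m2 T C \<tau>)"
  define M\<eta> where "M\<eta> = enn2real (obs_M2 T C \<eta>)"
  define M where "M = enn2real (obs_M2 T C (\<tau> - \<eta>))"
  have M: "obs_M2 T C \<eta> = ennreal M\<eta>" "obs_M2 T C (\<tau> - \<eta>) = ennreal M" "M\<eta> \<ge> 0" "M \<ge> 0"
    using admissible_obs_M2_finite[OF adm] by (simp_all add: M\<eta>_def M_def)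
  have "Re l \<le> max 0 (- ln ((m - M\<eta>) / (2 * M)) / (2 * \<eta>))" if l: "l \<in> approx_point_spectrum T" for l
  proof (cases "Re l \<ge> 0")
    case True
    have bound: "obs_m2 T C \<tau> \<le> ennreal (M\<eta> + 2 * exp (- (2 * \<eta> * Re l)) * M)"
      using approximate_eigenvalue_energy_bound[OF adm \<eta> l True] M by (simp add: ennreal_mult ennreal_plus)
    then have "obs_m2 T C \<tau> = ennreal m" by (cases "obs_m2 T C \<tau>") (auto simp: m_def top_unique)
    moreover have "0 \<le> M\<eta> + 2 * exp (- (2 * \<eta> * Re l)) * M" using M by simp
    ultimately have "M\<eta> < m" "m \<le> M\<eta> + 2 * exp (- (2 * \<eta> * Re l)) * M"
      using gap bound M by (metis ennreal_less_iff, metis ennreal_le_iff)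
    then have "Re l \<le> - ln ((m - M\<eta>) / (2 * M)) / (2 * \<eta>)"
      using \<eta>(1) by (intro le_of_exp_lower_bound) (auto simp: mult_ac)
    then show ?thesis by simp
  qed simp
  then show ?thesis by (intro bdd_aboveI2)
qed

end

end

lemma zero_class_exactly_observable_imp_BFC_system:
  assumes "zero_class_admissible T C" "exactly_observable T C \<tau>" "\<tau> > 0"
  shows "BFC_system T C"
proof -
  have "eventually (\<lambda>s. obs_M2 T C s < obs_m2 T C \<tau>) (at_right 0)"
    using assms(1,2) by (intro order_tendstoD(2)) (auto simp: zero_class_admissible_def exactly_observable_def)
  then obtain b where b: "b > 0" "\<And>s. s > 0 \<Longrightarrow> s < b \<Longrightarrow> obs_M2 T C s < obs_m2 T C \<tau>"
    unfolding eventually_at_right[of 0 \<tau>, OF assms(3)] by auto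
  define \<eta> where "\<eta> = min b \<tau> / 2"
  have "0 < \<eta>" "\<eta> < \<tau>" "\<eta> < b" using b assms(3) by (auto simp: \<eta>_def)
  then show ?thesis
    using assms(1,2) b(2) unfolding BFC_system_def zero_class_admissible_def by blast
qed

lemma bdd_above_Re_imp_no_divergent_sequence:
  assumes "bdd_above (Re ` S)"
  shows "\<not> (\<exists>l :: nat \<Rightarrow> complex. (\<forall>n. l n \<in> S) \<and> filterlim (\<lambda>n. Re (l n)) at_top sequentially)"
proof
  assume "\<exists>l :: nat \<Rightarrow> complex. (\<forall>n. l n \<in> S) \<and> filterlim (\<lambda>n. Re (l n)) at_top sequentially"
  then obtain l :: "nat \<Rightarrow> complex" where l: "\<And>n. l n \<in> S" "filterlim (\<lambda>n. Re (l n)) at_top sequentially"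
    by blast
  obtain R where R: "\<And>z. z \<in> S \<Longrightarrow> Re z \<le> R" using assms by (auto simp: bdd_above_def)
  have "eventually (\<lambda>n. R < Re (l n)) sequentially"
    using l(2) by (simp add: filterlim_at_top_dense)
  then show False using R l(1) by (auto simp: eventually_sequentially not_le[symmetric])
qed

theorem proposition3p3:
  fixes T :: "real \<Rightarrow> 'x::complex_banach \<Rightarrow> 'x"
    and C :: "'x \<Rightarrow> 'y::complex_banach"
  assumes "c0_semigroup T"
    and "obs_operator T C"
  shows "(BFC_system T C \<longrightarrow>
            \<not> (\<exists>l :: nat \<Rightarrow> complex. (\<forall>n. l n \<in> approx_point_spectrum T) \<and>
                   filterlim (\<lambda>n. Re (l n)) at_top sequentially) \<and>
            bdd_above (Re ` approx_point_spectrum T))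
       \<and> ((zero_class_admissible T C \<and>
            (\<exists>l :: nat \<Rightarrow> complex. (\<forall>n. l n \<in> approx_point_spectrum T) \<and>
                   filterlim (\<lambda>n. Re (l n)) at_top sequentially))
          \<longrightarrow> (\<forall>\<eta>>0. \<not> exactly_observable T C \<eta>))"
proof -
  have bounded: "BFC_system T C \<Longrightarrow> bdd_above (Re ` approx_point_spectrum T)"
    using BFC_system_bdd_above_Re[OF assms] .
  then have no_divergent_sequence: "BFC_system T C \<Longrightarrow>
      \<not> (\<exists>l :: nat \<Rightarrow> complex. (\<forall>n. l n \<in> approx_point_spectrum T) \<and>
            filterlim (\<lambda>n. Re (l n)) at_top sequentially)"
    by (rule bdd_above_Re_imp_no_divergent_sequence)
  have not_observable: "\<not> exactly_observable T C \<eta>"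
    if zero_class: "zero_class_admissible T C" and \<eta>: "\<eta> > 0"
      and divergent: "\<exists>l :: nat \<Rightarrow> complex. (\<forall>n. l n \<in> approx_point_spectrum T) \<and>
             filterlim (\<lambda>n. Re (l n)) at_top sequentially" for \<eta>
  proof
    assume "exactly_observable T C \<eta>"
    then have "BFC_system T C" by (rule zero_class_exactly_observable_imp_BFC_system[OF zero_class _ \<eta>])
    then show False using no_divergent_sequence divergent by simp
  qed
  show ?thesis using bounded no_divergent_sequence not_observable by simp
qed

end
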